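(* Let $d=5$, let $0<\epsilon<\frac35$, and define $\mu(X)=w(|X|)$ for $X\in Q_5$, where $w(0)=\frac1{16}(1-\epsilon)+\frac38\epsilon$, $w(2)=\frac1{16}(1-\epsilon)$, $w(4)=\frac1{16}(1-\epsilon)+\frac18\epsilon$, and $w(1)=w(3)=w(5)=0$. Then $\mu$ is a probability distribution with $w_i^0=\frac12$ for all $i\in[5]$, and $\mu$ has no equilibrium: for every $X\in Q_5$ there is $Y\in Q_5$ with $P_1(X,Y)<\frac12$.
   Context: $Q_d=\{0,1\}^d$ with the Hamming distance $d(X,Y)=|\{i: x_i\neq y_i\}|$; $|X|$ is the number of coordinates equal to $1$. For a probability distribution $\mu$ on $Q_d$ (extended additively to subsets), and $A,B\in Q_d$, let $V(A,B)=\{Z: d(Z,A)<d(Z,B)\}$, $T(A,B)=\{Z: d(Z,A)=d(Z,B)\}$, $P_1(A,B)=\mu(V(A,B))+\frac12\mu(T(A,B))$, $P_2(A,B)=\mu(V(B,A))+\frac12\mu(T(A,B))$. $(A,B)$ is an equilibrium if $P_1(A,B)\ge P_1(A',B)$ for all $A'$ and $P_2(A,B)\ge P_2(A,B')$ for all $B'$. $w_i^0=\mu(\{Z: z_i=0\})$. *)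

theory Defs
  imports Complex_Main
begin
text \<open>Points of Q_d are boolean lists of length d (True = coordinate 1),
coordinate i of the paper corresponds to list index i-1.\<close>

definition cube :: "nat \<Rightarrow> bool list set" where
  "cube d = {xs. length xs = d}"

definition hamming :: "bool list \<Rightarrow> bool list \<Rightarrow> nat" where
  "hamming X Y = card {i. i < length X \<and> X ! i \<noteq> Y ! i}"

definition weight :: "bool list \<Rightarrow> nat" where
  "weight X = card {i. i < length X \<and> X ! i}"

definition meas :: "(bool list \<Rightarrow> real) \<Rightarrow> bool list set \<Rightarrow> real" where
  "meas mu S = (\<Sum>Z\<in>S. mu Z)"

definition is_prob_dist :: "nat \<Rightarrow> (bool list \<Rightarrow> real) \<Rightarrow> bool" where
  "is_prob_dist d mu \<longleftrightarrow> (\<forall>Z\<in>cube d. mu Z \<ge> 0) \<and> meas mu (cube d) = 1"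

definition Vor :: "nat \<Rightarrow> bool list \<Rightarrow> bool list \<Rightarrow> bool list set" where
  "Vor d A B = {Z \<in> cube d. hamming Z A < hamming Z B}"

definition Tie :: "nat \<Rightarrow> bool list \<Rightarrow> bool list \<Rightarrow> bool list set" where
  "Tie d A B = {Z \<in> cube d. hamming Z A = hamming Z B}"

definition P1 :: "nat \<Rightarrow> (bool list \<Rightarrow> real) \<Rightarrow> bool list \<Rightarrow> bool list \<Rightarrow> real" where
  "P1 d mu A B = meas mu (Vor d A B) + 1/2 * meas mu (Tie d A B)"

definition P2 :: "nat \<Rightarrow> (bool list \<Rightarrow> real) \<Rightarrow> bool list \<Rightarrow> bool list \<Rightarrow> real" where
  "P2 d mu A B = meas mu (Vor d B A) + 1/2 * meas mu (Tie d A B)"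

definition equilibrium :: "nat \<Rightarrow> (bool list \<Rightarrow> real) \<Rightarrow> bool list \<Rightarrow> bool list \<Rightarrow> bool" where
  "equilibrium d mu A B \<longleftrightarrow> A \<in> cube d \<and> B \<in> cube d \<and>
     (\<forall>A'\<in>cube d. P1 d mu A B \<ge> P1 d mu A' B) \<and>
     (\<forall>B'\<in>cube d. P2 d mu A B \<ge> P2 d mu A B')"

text \<open>w_i^0 for list index i (paper coordinate i+1).\<close>
definition w0 :: "nat \<Rightarrow> (bool list \<Rightarrow> real) \<Rightarrow> nat \<Rightarrow> real" where
  "w0 d mu i = meas mu {Z \<in> cube d. \<not> Z ! i}"

end

theory Submission
  imports Defs "HOL-Combinatorics.Permutations"
begin

text \<open>Since P1 X Y + P2 X Y = 1 and P1 B B = 1/2, the first player secures at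
least 1/2 in any equilibrium; so there is none as soon as every position X is
beaten by some reply Y, i.e. P1 X Y < 1/2. Because mu depends only on the weight,
P1 is invariant under simultaneous permutations of the coordinates, hence it
suffices to beat one position of each weight 0, ..., 5. These six values, like
the normalisation and the marginals, are finite computations affine in epsilon.\<close>

lemma card_less_Suc_conv:
  "card {i. i < Suc n \<and> P i} = (if P 0 then 1 else 0) + card {i. i < n \<and> P (Suc i)}"
proof -
  have "{i. i < Suc n \<and> P i} = {i. i = 0 \<and> P 0} \<union> Suc ` {i. i < n \<and> P (Suc i)}"
    by (auto simp: image_iff less_Suc_eq_0_disj)
  moreover have "card ({i. i = 0 \<and> P 0} \<union> Suc ` {i. i < n \<and> P (Suc i)})
        = card {i::nat. i = 0 \<and> P 0} + card (Suc ` {i. i < n \<and> P (Suc i)})"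
    by (rule card_Un_disjoint) auto
  moreover have "card (Suc ` {i. i < n \<and> P (Suc i)}) = card {i. i < n \<and> P (Suc i)}"
    by (rule card_image) auto
  ultimately show ?thesis by simp
qed

lemma hamming_Nil: "hamming [] Y = 0"
  by (simp add: hamming_def)

lemma hamming_Cons: "hamming (x # X) (y # Y) = (if x \<noteq> y then 1 else 0) + hamming X Y"
  unfolding hamming_def by (simp add: card_less_Suc_conv)

lemma weight_Nil: "weight [] = 0"
  by (simp add: weight_def)

lemma weight_Cons: "weight (x # X) = (if x then 1 else 0) + weight X"
  unfolding weight_def by (simp add: card_less_Suc_conv)

lemma weight_le_length: "weight X \<le> length X"
proof -
  have "weight X \<le> card {..<length X}"
    unfolding weight_def by (rule card_mono) auto
  then show ?thesis by simp
qed

lemma finite_cube: "finite (cube d)"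
proof -
  have "cube d = {xs. set xs \<subseteq> UNIV \<and> length xs = d}"
    by (simp add: cube_def)
  then show ?thesis
    using finite_lists_length_eq[of "UNIV :: bool set" d] by simp
qed

lemma meas_Un_disjoint:
  "finite S \<Longrightarrow> finite T \<Longrightarrow> S \<inter> T = {} \<Longrightarrow> meas mu (S \<union> T) = meas mu S + meas mu T"
  by (simp add: meas_def sum.union_disjoint)

lemma P1_plus_P2: "P1 d mu A B + P2 d mu A B = meas mu (cube d)"
proof -
  have finite: "finite (Vor d A B)" "finite (Vor d B A)" "finite (Tie d A B)"
    by (auto intro: finite_subset[OF _ finite_cube] simp: Vor_def Tie_def)
  have "cube d = (Vor d A B \<union> Vor d B A) \<union> Tie d A B"
    by (auto simp: Vor_def Tie_def)
  also have "meas mu \<dots> = meas mu (Vor d A B \<union> Vor d B A) + meas mu (Tie d A B)"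
    using finite by (intro meas_Un_disjoint) (auto simp: Vor_def Tie_def)
  also have "meas mu (Vor d A B \<union> Vor d B A) = meas mu (Vor d A B) + meas mu (Vor d B A)"
    using finite by (intro meas_Un_disjoint) (auto simp: Vor_def)
  finally show ?thesis
    by (simp add: P1_def P2_def)
qed

lemma P1_self: "P1 d mu A A = 1/2 * meas mu (cube d)"
  by (simp add: P1_def Vor_def Tie_def meas_def)

lemma no_equilibrium_if_beaten:
  assumes "meas mu (cube d) = 1" and "\<forall>X\<in>cube d. \<exists>Y\<in>cube d. P1 d mu X Y < 1/2"
  shows "\<not> (\<exists>A B. equilibrium d mu A B)"
proof
  assume "\<exists>A B. equilibrium d mu A B"
  then obtain A B where A: "A \<in> cube d" and B: "B \<in> cube d"
    and best_reply1: "\<forall>A'\<in>cube d. P1 d mu A B \<ge> P1 d mu A' B"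
    and best_reply2: "\<forall>B'\<in>cube d. P2 d mu A B \<ge> P2 d mu A B'"
    unfolding equilibrium_def by blast
  obtain Y where Y: "Y \<in> cube d" "P1 d mu A Y < 1/2"
    using assms(2) A by blast
  have "P1 d mu A B \<ge> 1/2"
    using best_reply1 B P1_self[of d mu B] assms(1) by fastforce
  moreover have "P2 d mu A B \<ge> P2 d mu A Y"
    using best_reply2 Y(1) by blast
  ultimately show False
    using Y(2) P1_plus_P2[of d mu A B] P1_plus_P2[of d mu A Y] assms(1) by linarith
qed

lemma count_mset_bool_list:
  "count (mset X) True = weight X"
  "count (mset X) False = length X - weight X"
proof -
  show True: "count (mset X) True = weight X"
    by (induction X) (simp_all add: weight_Nil weight_Cons)
  have "count (mset X) True + count (mset X) False = length X"
    by (induction X) auto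
  then show "count (mset X) False = length X - weight X"
    using True by simp
qed

lemma mset_eq_if_weight_eq:
  assumes "length X = length Y" and "weight X = weight Y"
  shows "mset X = mset Y"
proof (rule multiset_eqI)
  show "count (mset X) b = count (mset Y) b" for b
    using assms by (cases b) (simp_all add: count_mset_bool_list)
qed

lemma card_permutes_reindex:
  assumes "p permutes {..<n}"
  shows "card {i. i < n \<and> P (p i)} = card {i. i < n \<and> P i}"
proof -
  have "{i. i < n \<and> P (p i)} = {..<n} \<inter> p -` {i. P i}"
    by auto
  then have "p ` {i. i < n \<and> P (p i)} = {i. i < n \<and> P i}"
    using permutes_image[OF assms] permutes_surj[OF assms] by auto
  moreover have "inj_on p {i. i < n \<and> P (p i)}"
    using permutes_inj[OF assms] by (rule inj_on_subset) simp
  ultimately show ?thesis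
    by (metis card_image)
qed

lemma hamming_permute_list:
  assumes "p permutes {..<length X}" and "length Y = length X"
  shows "hamming (permute_list p X) (permute_list p Y) = hamming X Y"
  using card_permutes_reindex[OF assms(1), of "\<lambda>i. X ! i \<noteq> Y ! i"] assms
  by (simp add: hamming_def permute_list_nth cong: conj_cong)

lemma weight_permute_list:
  assumes "p permutes {..<length X}"
  shows "weight (permute_list p X) = weight X"
  using assms by (metis count_mset_bool_list(1) mset_permute_list)

lemma permute_list_inv_permute_list:
  assumes "p permutes {..<length X}"
  shows "permute_list (inv p) (permute_list p X) = X"
  using permute_list_compose[OF permutes_inv[OF assms], of p] permutes_inv_o(1)[OF assms]
  by simp

lemma bij_betw_permute_list_cube:
  assumes "p permutes {..<d}"
  shows "bij_betw (permute_list p) (cube d) (cube d)"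
proof (rule bij_betw_byWitness[where f' = "permute_list (inv p)"])
  show "\<forall>X\<in>cube d. permute_list (inv p) (permute_list p X) = X"
    using assms by (simp add: cube_def permute_list_inv_permute_list)
  show "\<forall>X\<in>cube d. permute_list p (permute_list (inv p) X) = X"
  proof
    fix X assume "X \<in> cube d"
    then have "inv p permutes {..<length X}"
      using permutes_inv[OF assms] by (simp add: cube_def)
    then show "permute_list p (permute_list (inv p) X) = X"
      using permute_list_inv_permute_list inv_inv_eq[OF permutes_bij[OF assms]] by metis
  qed
qed (auto simp: cube_def)

lemma cube_filter_permute_list:
  assumes "p permutes {..<d}" and "A \<in> cube d" and "B \<in> cube d"
  shows "{Z \<in> cube d. R (hamming Z (permute_list p A)) (hamming Z (permute_list p B))}
       = permute_list p ` {Z \<in> cube d. R (hamming Z A) (hamming Z B)}"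
proof -
  have hamming_eq: "hamming (permute_list p Z) (permute_list p C) = hamming Z C"
    if "Z \<in> cube d" "C \<in> cube d" for Z C
    using that assms(1) by (simp add: cube_def hamming_permute_list)
  have "cube d = permute_list p ` cube d"
    using bij_betw_imp_surj_on[OF bij_betw_permute_list_cube[OF assms(1)]] by simp
  then have "{Z \<in> cube d. R (hamming Z (permute_list p A)) (hamming Z (permute_list p B))}
      = {Z \<in> permute_list p ` cube d.
           R (hamming Z (permute_list p A)) (hamming Z (permute_list p B))}"
    by simp
  also have "\<dots> = permute_list p ` {Z \<in> cube d. R (hamming Z A) (hamming Z B)}"
    using hamming_eq assms(2,3) by auto
  finally show ?thesis .
qed

lemma meas_image_permute_list:
  assumes "p permutes {..<d}" and "S \<subseteq> cube d"
    and "\<And>Z. Z \<in> S \<Longrightarrow> mu (permute_list p Z) = mu Z"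
  shows "meas mu (permute_list p ` S) = meas mu S"
proof -
  have "inj_on (permute_list p) S"
    using bij_betw_imp_inj_on[OF bij_betw_permute_list_cube[OF assms(1)]] assms(2)
    by (rule inj_on_subset)
  then show ?thesis
    using assms(3) by (simp add: meas_def sum.reindex)
qed

lemma P1_permute_list:
  assumes "p permutes {..<d}" and "A \<in> cube d" and "B \<in> cube d"
    and "\<And>Z. Z \<in> cube d \<Longrightarrow> mu (permute_list p Z) = mu Z"
  shows "P1 d mu (permute_list p A) (permute_list p B) = P1 d mu A B"
  unfolding P1_def Vor_def Tie_def cube_filter_permute_list[OF assms(1-3)]
  using assms(1,4) by (subst (1 2) meas_image_permute_list) auto

lemma beaten_if_sorted_beaten:
  assumes sorted_beaten: "\<And>k. k \<le> d \<Longrightarrow>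
      \<exists>Y\<in>cube d. P1 d (\<lambda>Z. f (weight Z)) (replicate k True @ replicate (d - k) False) Y < 1/2"
    and "X \<in> cube d"
  shows "\<exists>Y\<in>cube d. P1 d (\<lambda>Z. f (weight Z)) X Y < 1/2"
proof -
  let ?mu = "\<lambda>Z. f (weight Z)"
  let ?S = "replicate (weight X) True @ replicate (d - weight X) False"
  have "weight X \<le> d"
    using weight_le_length[of X] \<open>X \<in> cube d\<close> by (simp add: cube_def)
  then have S_cube: "?S \<in> cube d"
    by (simp add: cube_def)
  have "mset X = mset ?S"
    using \<open>X \<in> cube d\<close> S_cube count_mset_bool_list(1)[of ?S]
    by (intro mset_eq_if_weight_eq) (simp_all add: cube_def)
  then obtain p where p: "p permutes {..<d}" "permute_list p ?S = X"
    using S_cube by (elim mset_eq_permutation) (simp add: cube_def)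
  obtain Y where Y: "Y \<in> cube d" "P1 d ?mu ?S Y < 1/2"
    using sorted_beaten[OF \<open>weight X \<le> d\<close>] by blast
  have "?mu (permute_list p Z) = ?mu Z" if "Z \<in> cube d" for Z
    using that p(1) by (simp add: cube_def weight_permute_list)
  then have "P1 d ?mu (permute_list p ?S) (permute_list p Y) = P1 d ?mu ?S Y"
    by (rule P1_permute_list[OF p(1) S_cube Y(1)])
  moreover have "permute_list p Y \<in> cube d"
    using Y(1) by (simp add: cube_def)
  ultimately show ?thesis
    using Y(2) p(2) by metis
qed

fun cube_list :: "nat \<Rightarrow> bool list list" where
  "cube_list 0 = [[]]"
| "cube_list (Suc n) = map (Cons False) (cube_list n) @ map (Cons True) (cube_list n)"

lemma set_cube_list: "set (cube_list d) = cube d"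
proof (induction d)
  case 0
  then show ?case by (auto simp: cube_def)
next
  case (Suc d)
  have "X \<in> set (cube_list (Suc d))" if "X \<in> cube (Suc d)" for X
    using that Suc by (cases X) (auto simp: cube_def)
  then show ?case
    using Suc by (auto simp: cube_def)
qed

lemma distinct_cube_list: "distinct (cube_list d)"
  by (induction d) (auto simp: distinct_map inj_on_def)

lemma meas_eq_sum_list:
  "meas mu {Z \<in> cube d. P Z} = (\<Sum>Z\<leftarrow>cube_list d. if P Z then mu Z else 0)"
  by (simp add: meas_def sum.inter_filter finite_cube sum_list_distinct_conv_sum_set
      distinct_cube_list set_cube_list)

lemma meas_cube_eq_sum_list: "meas mu (cube d) = (\<Sum>Z\<leftarrow>cube_list d. mu Z)"
  by (simp add: meas_def sum_list_distinct_conv_sum_set distinct_cube_list set_cube_list)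

lemmas cube_list_eval = eval_nat_numeral hamming_Nil hamming_Cons weight_Nil weight_Cons

definition example_weight :: "real \<Rightarrow> nat \<Rightarrow> real" where
  "example_weight \<epsilon> k =
    (if k = 0 then (1/16) * (1 - \<epsilon>) + (3/8) * \<epsilon>
     else if k = 2 then (1/16) * (1 - \<epsilon>)
     else if k = 4 then (1/16) * (1 - \<epsilon>) + (1/8) * \<epsilon>
     else 0)"

lemma example_is_prob_dist:
  assumes "0 \<le> \<epsilon>" and "\<epsilon> \<le> 1"
  shows "is_prob_dist 5 (\<lambda>X. example_weight \<epsilon> (weight X))"
  unfolding is_prob_dist_def
proof
  show "\<forall>Z\<in>cube 5. example_weight \<epsilon> (weight Z) \<ge> 0"
    using assms by (simp add: example_weight_def)
  show "meas (\<lambda>X. example_weight \<epsilon> (weight X)) (cube 5) = 1"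
    unfolding meas_cube_eq_sum_list example_weight_def
    by (simp add: cube_list_eval; simp add: field_simps)
qed

lemma example_w0:
  assumes "i < 5"
  shows "w0 5 (\<lambda>X. example_weight \<epsilon> (weight X)) i = 1/2"
proof -
  have "i = 0 \<or> i = 1 \<or> i = 2 \<or> i = 3 \<or> i = 4"
    using assms by auto
  then show ?thesis
    unfolding w0_def meas_eq_sum_list example_weight_def
    by (elim disjE) (simp add: cube_list_eval; simp add: field_simps)+
qed

lemma example_sorted_beaten:
  assumes "0 < \<epsilon>" and "\<epsilon> < 3/5" and "k \<le> 5"
  shows "\<exists>Y\<in>cube 5. P1 5 (\<lambda>X. example_weight \<epsilon> (weight X))
           (replicate k True @ replicate (5 - k) False) Y < 1/2"
proof
  let ?Y = "[[False, False, True, True, True], [False, True, True, True, True],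
             [False, False, False, False, True], [False, False, False, True, True],
             [False, False, True, True, True], [False, False, False, False, False]] ! k"
  have k_cases: "k = 0 \<or> k = 1 \<or> k = 2 \<or> k = 3 \<or> k = 4 \<or> k = 5"
    using assms(3) by auto
  then show "?Y \<in> cube 5"
    by (elim disjE) (simp_all add: cube_def)
  txt \<open>Each of these values of P1 is affine in epsilon and at most 1/2 at both ends
    of the interval (0, 3/5), with equality at no more than one end.\<close>
  from k_cases show "P1 5 (\<lambda>X. example_weight \<epsilon> (weight X))
      (replicate k True @ replicate (5 - k) False) ?Y < 1/2"
    unfolding P1_def Vor_def Tie_def meas_eq_sum_list example_weight_def using assms(1,2)
    by (elim disjE) (simp add: cube_list_eval; simp add: field_simps)+
qed

theorem mainTheorem9:
  fixes \<epsilon> :: real and w :: "nat \<Rightarrow> real" and mu :: "bool list \<Rightarrow> real"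
  assumes "0 < \<epsilon>" and "\<epsilon> < 3/5"
  defines "w \<equiv> (\<lambda>k. if k = 0 then (1/16) * (1 - \<epsilon>) + (3/8) * \<epsilon>
                  else if k = 2 then (1/16) * (1 - \<epsilon>)
                  else if k = 4 then (1/16) * (1 - \<epsilon>) + (1/8) * \<epsilon>
                  else 0)"
  defines "mu \<equiv> (\<lambda>X. w (weight X))"
  shows "is_prob_dist 5 mu \<and> (\<forall>i<5. w0 5 mu i = 1/2)
         \<and> \<not> (\<exists>A B. equilibrium 5 mu A B)
         \<and> (\<forall>X\<in>cube 5. \<exists>Y\<in>cube 5. P1 5 mu X Y < 1/2)"
proof -
  have mu: "mu = (\<lambda>X. example_weight \<epsilon> (weight X))"
    unfolding mu_def w_def example_weight_def ..
  have prob: "is_prob_dist 5 mu"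
    unfolding mu using assms(1,2) by (intro example_is_prob_dist) simp_all
  have beaten: "\<forall>X\<in>cube 5. \<exists>Y\<in>cube 5. P1 5 mu X Y < 1/2"
    unfolding mu using beaten_if_sorted_beaten example_sorted_beaten[OF assms(1,2)] by blast
  moreover have "\<not> (\<exists>A B. equilibrium 5 mu A B)"
    using prob beaten by (intro no_equilibrium_if_beaten) (simp_all add: is_prob_dist_def)
  ultimately show ?thesis
    using prob example_w0 unfolding mu by blast
qed

end
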